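(* Let $n\ge2$ and let $\widehat T\subset\mathbb R^n$ be a Kuhn simplex. Then (i) $\operatorname{diam}(\widehat T)=R(\widehat T)=\sqrt n$; (ii) $w(\widehat T)=1/\sqrt2$; (iii) $1/r(\widehat T)=1+(n-1)/\sqrt2$; (iv) $\gamma(\widehat T)=\sqrt n\,(1+(n-1)/\sqrt2)$; (v) $2\gamma(\widehat T)\operatorname{diam}(\widehat T)/w(\widehat T)=2n(n+\sqrt2-1)$.
   Context: A Kuhn simplex is $[0,e_{\pi(1)},e_{\pi(1)}+e_{\pi(2)},\dots,e_{\pi(1)}+\dots+e_{\pi(n)}]$ for a permutation $\pi$ of $\{1,\dots,n\}$ and unit vectors $e_i$ of $\mathbb R^n$. For a simplex $S$: $R(S)$ is the diameter of the smallest ball containing $S$, $r(S)$ the diameter of the largest ball contained in $S$, $\gamma(S)=R(S)/r(S)$, and $w(S)=\min_f\sup_{x\in S}\operatorname{dist}(x,f)$ over the $(n-1)$-dimensional faces $f$ of $S$ (minimal height). *)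

theory Defs
  imports "HOL-Analysis.Analysis"
begin

text \<open>R^n is modelled as real^'n with n = CARD('n). A permutation of the coordinates
 is given as a bijection p from {1..n} onto the index type 'n; e_{p j} = axis (p j) 1.\<close>

definition kuhn_vertex :: "(nat \<Rightarrow> 'n::finite) \<Rightarrow> nat \<Rightarrow> real^'n" where
  "kuhn_vertex p k = (\<Sum>j\<in>{1..k}. axis (p j) 1)"

definition kuhn_simplex :: "(nat \<Rightarrow> 'n::finite) \<Rightarrow> (real^'n) set" where
  "kuhn_simplex p = convex hull {kuhn_vertex p k | k. k \<le> CARD('n)}"

definition circum_diam :: "(real^'n::finite) set \<Rightarrow> real" where
  "circum_diam S = 2 * Inf {\<rho>. \<exists>c. S \<subseteq> cball c \<rho>}"

definition in_diam :: "(real^'n::finite) set \<Rightarrow> real" where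
  "in_diam S = 2 * Sup {\<rho>. \<exists>c. cball c \<rho> \<subseteq> S}"

definition gamma_ratio :: "(real^'n::finite) set \<Rightarrow> real" where
  "gamma_ratio S = circum_diam S / in_diam S"

definition min_height :: "(real^'n::finite) set \<Rightarrow> real" where
  "min_height S = Inf ((\<lambda>f. Sup ((\<lambda>x. infdist x f) ` S)) `
      {f. f face_of S \<and> aff_dim f = int CARD('n) - 1})"

end

theory Submission
  imports Defs
begin

text \<open>
  Write \<open>\<lambda>_j(x) = x_{p(j)} - x_{p(j+1)}\<close> for \<open>j = 0..n\<close>, reading \<open>x_{p(0)} = 1\<close> and \<open>x_{p(n+1)} = 0\<close>.
  These affine functions are the barycentric coordinates of the Kuhn simplex \<open>T\<close>: they take the
  value \<open>\<delta>_{jk}\<close> at the vertex \<open>v_k\<close>, they sum to 1, and \<open>T = {x. \<forall>j. \<lambda>_j(x) \<ge> 0}\<close>. Their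
  gradients \<open>u_j = e_{p(j)} - e_{p(j+1)}\<close> have norm 1 for \<open>j \<in> {0, n}\<close> and \<open>sqrt 2\<close> otherwise, and
  pairwise non-positive inner products.

  All vertices are 0/1 vectors, so \<open>T\<close> lies in the ball of radius \<open>sqrt n / 2\<close> about
  \<open>(1/2, ..., 1/2)\<close>, and it contains the antipodal points \<open>v_0 = 0\<close> and \<open>v_n = (1, ..., 1)\<close>:
  diameter and circumdiameter are \<open>sqrt n\<close>. A ball \<open>B(c, r)\<close> lies in \<open>T\<close> iff
  \<open>\<lambda>_j(c) \<ge> r |u_j|\<close> for all \<open>j\<close>; summing over \<open>j\<close> bounds the inradius by
  \<open>1 / \<Sum>_j |u_j| = 1 / (2 + (n - 1) sqrt 2)\<close>, with equality for the point with barycentric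
  coordinates proportional to \<open>|u_j|\<close>. The height of \<open>T\<close> over the facet \<open>\<lambda>_k = 0\<close> is exactly
  \<open>1 / |u_k|\<close>: it is attained at \<open>v_k\<close>, and the orthogonal projection onto the facet's hyperplane
  does not leave \<open>T\<close> because the \<open>u_j\<close> make non-acute angles.
\<close>

lemma norm_vec_eq_if_abs_nth_eq:
  fixes x :: "real^'n"
  assumes "\<And>i. \<bar>x $ i\<bar> = c" and "0 \<le> c"
  shows "norm x = sqrt (real CARD('n)) * c"
proof -
  have "norm x = sqrt (\<Sum>i\<in>UNIV. \<bar>x $ i\<bar>\<^sup>2)"
    by (simp add: norm_vec_def L2_set_def)
  also have "\<dots> = sqrt (real CARD('n) * c\<^sup>2)"
    by (simp add: assms(1))
  finally show ?thesis
    using assms(2) by (simp add: real_sqrt_mult)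
qed

lemma diameter_eq_if_antipodal_in_cball:
  fixes S :: "'a::metric_space set"
  assumes "S \<subseteq> cball c (d / 2)" and "a \<in> S" and "b \<in> S" and "dist a b = d"
  shows "diameter S = d"
proof (rule antisym)
  have "dist x y \<le> d" if "x \<in> S" "y \<in> S" for x y
  proof -
    have "dist c x \<le> d / 2" "dist c y \<le> d / 2"
      using assms(1) that by auto
    then show ?thesis
      using dist_triangle[of x y c] by (simp add: dist_commute)
  qed
  then show "diameter S \<le> d"
    using assms(2) unfolding diameter_def by (auto intro!: cSUP_least)
  show "d \<le> diameter S"
    using diameter_bounded_bound[of S a b] bounded_subset[OF bounded_cball assms(1)] assms(2-4)
    by simp
qed

lemma circum_diam_eq_if_antipodal_in_cball:
  assumes "S \<subseteq> cball c (d / 2)" and "a \<in> S" and "b \<in> S" and "dist a b = d"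
  shows "circum_diam S = d"
proof -
  have "d / 2 \<le> \<rho>" if "S \<subseteq> cball c' \<rho>" for c' \<rho>
  proof -
    have "dist c' a \<le> \<rho>" "dist c' b \<le> \<rho>"
      using that assms(2,3) by auto
    then show ?thesis
      using dist_triangle[of a b c'] assms(4) by (simp add: dist_commute)
  qed
  then have "Inf {\<rho>. \<exists>c. S \<subseteq> cball c \<rho>} = d / 2"
    using assms(1) by (intro cInf_eq_minimum) auto
  then show ?thesis
    by (simp add: circum_diam_def)
qed

lemma cball_subset_halfspace_ge_iff:
  fixes u c :: "'a::real_inner"
  assumes "u \<noteq> 0" and "0 \<le> r"
  shows "cball c r \<subseteq> {x. b \<le> inner u x} \<longleftrightarrow> b + r * norm u \<le> inner u c"
proof
  assume "cball c r \<subseteq> {x. b \<le> inner u x}"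
  moreover have "c - (r / norm u) *\<^sub>R u \<in> cball c r"
    using assms by (simp add: dist_norm)
  ultimately have "b \<le> inner u (c - (r / norm u) *\<^sub>R u)"
    by blast
  also have "\<dots> = inner u c - (r / norm u) * inner u u"
    by (simp add: inner_diff_right)
  also have "\<dots> = inner u c - r * norm u"
    using assms(1) by (simp add: power2_norm_eq_inner[symmetric] power2_eq_square)
  finally show "b + r * norm u \<le> inner u c"
    by simp
next
  assume "b + r * norm u \<le> inner u c"
  moreover have "inner u c - r * norm u \<le> inner u x" if "x \<in> cball c r" for x
  proof -
    have "inner u (c - x) \<le> norm u * r"
      using norm_cauchy_schwarz[of u "c - x"] that mult_left_mono[of "dist c x" r "norm u"]
      by (simp add: dist_norm)
    then show ?thesis
      by (simp add: inner_diff_right algebra_simps)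
  qed
  ultimately show "cball c r \<subseteq> {x. b \<le> inner u x}"
    by force
qed

lemma affine_independent_if_separated_by_hyperplanes:
  assumes "\<And>a. a \<in> S \<Longrightarrow> \<exists>u b. inner u a \<noteq> b \<and> (\<forall>y\<in>S - {a}. inner u y = b)"
  shows "\<not> affine_dependent S"
proof -
  have "a \<notin> affine hull (S - {a})" if a: "a \<in> S" for a
  proof -
    obtain u b where "inner u a \<noteq> b" and "S - {a} \<subseteq> {y. inner u y = b}"
      using assms[OF a] by blast
    then have "affine hull (S - {a}) \<subseteq> {y. inner u y = b}"
      by (intro hull_minimal affine_hyperplane)
    with \<open>inner u a \<noteq> b\<close> show ?thesis
      by blast
  qed
  then show ?thesis
    by (auto simp: affine_dependent_def)
qed

locale kuhn_permutation =
  fixes p :: "nat \<Rightarrow> 'n::finite"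
  assumes bij_p: "bij_betw p {1..CARD('n)} UNIV"
begin

definition perm_axis :: "nat \<Rightarrow> real^'n" where
  "perm_axis j = (if j \<in> {1..CARD('n)} then axis (p j) 1 else 0)"

definition facet_normal :: "nat \<Rightarrow> real^'n" where
  "facet_normal j = perm_axis j - perm_axis (Suc j)"

text \<open>\<open>bary x j = x_{p(j)} - x_{p(j+1)}\<close>; the conventions \<open>x_{p(0)} = 1\<close> and \<open>x_{p(n+1)} = 0\<close> are
  encoded by \<^const>\<open>perm_axis\<close> vanishing outside \<open>{1..n}\<close> and by the summand for \<open>j = 0\<close>.\<close>

definition bary :: "real^'n \<Rightarrow> nat \<Rightarrow> real" where
  "bary x j = inner (facet_normal j) x + of_bool (j = 0)"

abbreviation vertex :: "nat \<Rightarrow> real^'n" where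
  "vertex \<equiv> kuhn_vertex p"

definition vertices :: "(real^'n) set" where
  "vertices = vertex ` {..CARD('n)}"

definition facet :: "nat \<Rightarrow> (real^'n) set" where
  "facet k = convex hull (vertices - {vertex k})"

lemma p_eq_iff: "i \<in> {1..CARD('n)} \<Longrightarrow> j \<in> {1..CARD('n)} \<Longrightarrow> p i = p j \<longleftrightarrow> i = j"
  using bij_p by (auto simp: bij_betw_def inj_on_eq_iff)

lemma p_surjE:
  obtains j where "j \<in> {1..CARD('n)}" and "i = p j"
  using bij_p by (metis UNIV_I bij_betw_iff_bijections)

lemma inner_perm_axis: "inner (perm_axis j) x = (if j \<in> {1..CARD('n)} then x $ p j else 0)"
  by (simp add: perm_axis_def inner_axis')

lemma inner_perm_axis_perm_axis:
  "inner (perm_axis i) (perm_axis j) = of_bool (i = j \<and> i \<in> {1..CARD('n)})"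
  using p_eq_iff[of i j] by (auto simp: perm_axis_def inner_axis_axis)

lemma vertex_nth:
  assumes "j \<in> {1..CARD('n)}" and "l \<le> CARD('n)"
  shows "vertex l $ p j = of_bool (j \<le> l)"
proof -
  have "vertex l $ p j = (\<Sum>i\<in>{1..l}. of_bool (i = j))"
    unfolding kuhn_vertex_def sum_component
    using assms p_eq_iff by (intro sum.cong) (auto simp: axis_def)
  then show ?thesis
    using assms by simp
qed

lemma bary_vertex: "l \<le> CARD('n) \<Longrightarrow> bary (vertex l) j = of_bool (j = l)"
  by (auto simp: bary_def facet_normal_def inner_diff_left inner_perm_axis vertex_nth)

lemma bary_diff: "bary x j - bary y j = inner (facet_normal j) (x - y)"
  by (simp add: bary_def inner_diff_right)

lemma sum_facet_normal: "(\<Sum>j\<le>CARD('n). facet_normal j) = 0"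
  unfolding facet_normal_def sum_telescope by (simp add: perm_axis_def)

lemma sum_bary: "(\<Sum>j\<le>CARD('n). bary x j) = 1"
  by (simp add: bary_def sum.distrib inner_sum_left[symmetric] sum_facet_normal)

lemma sum_bary_scaleR_vertex: "(\<Sum>k\<le>CARD('n). bary x k *\<^sub>R vertex k) = x"
  unfolding vec_eq_iff
proof
  fix i
  obtain j where j: "j \<in> {1..CARD('n)}" "i = p j"
    using p_surjE .
  have "{..CARD('n)} \<inter> {k. j \<le> k} = {j..CARD('n)}"
    by auto
  then have "(\<Sum>k\<le>CARD('n). bary x k *\<^sub>R vertex k) $ i = (\<Sum>k=j..CARD('n). bary x k)"
    using j by (simp add: sum_component vertex_nth sum.If_cases)
  also have "\<dots> = (\<Sum>k=j..CARD('n). inner (perm_axis k) x - inner (perm_axis (Suc k)) x)"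
    using j by (intro sum.cong) (auto simp: bary_def facet_normal_def inner_diff_left)
  also have "\<dots> = x $ i"
    using sum_Suc_diff[of j "CARD('n)" "\<lambda>k. - inner (perm_axis k) x"] j
    by (simp add: inner_perm_axis)
  finally show "(\<Sum>k\<le>CARD('n). bary x k *\<^sub>R vertex k) $ i = x $ i" .
qed

lemma kuhn_simplex_eq_convex_hull_vertices: "kuhn_simplex p = convex hull vertices"
  by (simp add: kuhn_simplex_def vertices_def setcompr_eq_image atMost_def)

lemma vertex_in_kuhn_simplex: "l \<le> CARD('n) \<Longrightarrow> vertex l \<in> kuhn_simplex p"
  by (simp add: kuhn_simplex_eq_convex_hull_vertices vertices_def hull_inc)

lemma bary_nonneg_eq_halfspace:
  "{x. 0 \<le> bary x j} = {x. - of_bool (j = 0) \<le> inner (facet_normal j) x}"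
  by (auto simp: bary_def)

lemma kuhn_simplex_eq_bary_nonneg: "kuhn_simplex p = {x. \<forall>j\<le>CARD('n). 0 \<le> bary x j}"
proof
  have "{x. \<forall>j\<le>CARD('n). 0 \<le> bary x j} = (\<Inter>j\<in>{..CARD('n)}. {x. 0 \<le> bary x j})"
    by auto
  then have "convex {x. \<forall>j\<le>CARD('n). 0 \<le> bary x j}"
    by (simp add: convex_INT bary_nonneg_eq_halfspace convex_halfspace_ge)
  moreover have "vertices \<subseteq> {x. \<forall>j\<le>CARD('n). 0 \<le> bary x j}"
    by (auto simp: vertices_def bary_vertex)
  ultimately show "kuhn_simplex p \<subseteq> {x. \<forall>j\<le>CARD('n). 0 \<le> bary x j}"
    by (simp add: kuhn_simplex_eq_convex_hull_vertices hull_minimal)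
next
  show "{x. \<forall>j\<le>CARD('n). 0 \<le> bary x j} \<subseteq> kuhn_simplex p"
  proof
    fix x assume "x \<in> {x. \<forall>j\<le>CARD('n). 0 \<le> bary x j}"
    then have "(\<Sum>k\<le>CARD('n). bary x k *\<^sub>R vertex k) \<in> convex hull vertices"
      by (intro convex_sum) (auto simp: sum_bary vertices_def hull_inc)
    then show "x \<in> kuhn_simplex p"
      by (simp add: sum_bary_scaleR_vertex kuhn_simplex_eq_convex_hull_vertices)
  qed
qed

lemma bary_convex_combination:
  assumes "(\<Sum>k\<le>CARD('n). w k) = 1" and "j \<le> CARD('n)"
  shows "bary (\<Sum>k\<le>CARD('n). w k *\<^sub>R vertex k) j = w j"
proof -
  have "bary (\<Sum>k\<le>CARD('n). w k *\<^sub>R vertex k) j = (\<Sum>k\<le>CARD('n). w k * bary (vertex k) j)"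
    by (simp add: bary_def inner_sum_right sum.distrib sum_distrib_right[symmetric] assms(1) algebra_simps)
  also have "\<dots> = (\<Sum>k\<le>CARD('n). if k = j then w k else 0)"
    by (intro sum.cong) (auto simp: bary_vertex)
  finally show ?thesis
    using assms(2) by simp
qed

lemma norm_facet_normal:
  assumes "j \<le> CARD('n)"
  shows "norm (facet_normal j) = (if j = 0 \<or> j = CARD('n) then 1 else sqrt 2)"
proof -
  have "(norm (facet_normal j))\<^sup>2 = (if j = 0 \<or> j = CARD('n) then 1 else 2)"
    using assms
    by (auto simp: power2_norm_eq_inner facet_normal_def inner_diff_left inner_diff_right
        inner_perm_axis_perm_axis)
  then show ?thesis
    by (metis norm_ge_zero real_sqrt_one real_sqrt_unique)
qed

lemma facet_normal_nonzero: "j \<le> CARD('n) \<Longrightarrow> facet_normal j \<noteq> 0"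
  using norm_facet_normal[of j] by (metis norm_zero real_sqrt_eq_zero_cancel_iff zero_neq_numeral
      zero_neq_one)

lemma inner_facet_normal_nonpos: "j \<noteq> k \<Longrightarrow> inner (facet_normal j) (facet_normal k) \<le> 0"
  by (simp add: facet_normal_def inner_diff_left inner_diff_right inner_perm_axis_perm_axis)

lemma sum_norm_facet_normal:
  "(\<Sum>j\<le>CARD('n). norm (facet_normal j)) = 2 + (real CARD('n) - 1) * sqrt 2"
proof -
  have "{..CARD('n)} = insert 0 (insert (CARD('n)) {1..<CARD('n)})"
    by auto
  then show ?thesis
    by (simp add: norm_facet_normal)
qed

lemma vertex_nth_eq_0_or_1:
  assumes "l \<le> CARD('n)"
  shows "vertex l $ i = 0 \<or> vertex l $ i = 1"
proof -
  obtain j where "j \<in> {1..CARD('n)}" and "i = p j"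
    using p_surjE .
  then show ?thesis
    using assms by (simp add: vertex_nth)
qed

lemma kuhn_simplex_subset_cball:
  "kuhn_simplex p \<subseteq> cball (\<chi> i. 1 / 2) (sqrt (real CARD('n)) / 2)"
proof -
  have "dist (\<chi> i. 1 / 2) (vertex l) = sqrt (real CARD('n)) * (1 / 2)" if "l \<le> CARD('n)" for l
  proof -
    have "\<bar>((\<chi> i. 1 / 2) - vertex l) $ i\<bar> = 1 / 2" for i
      using vertex_nth_eq_0_or_1[OF that, of i] by auto
    then show ?thesis
      unfolding dist_norm by (rule norm_vec_eq_if_abs_nth_eq) simp
  qed
  then have "vertices \<subseteq> cball (\<chi> i. 1 / 2) (sqrt (real CARD('n)) / 2)"
    by (auto simp: vertices_def)
  then show ?thesis
    by (simp add: kuhn_simplex_eq_convex_hull_vertices hull_minimal)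
qed

lemma dist_vertex_0_vertex_card: "dist (vertex 0) (vertex CARD('n)) = sqrt (real CARD('n))"
proof -
  have "vertex CARD('n) $ i = 1" for i
  proof -
    obtain j where "j \<in> {1..CARD('n)}" and "i = p j"
      using p_surjE .
    then show ?thesis
      by (simp add: vertex_nth)
  qed
  then have "norm (vertex 0 - vertex CARD('n)) = sqrt (real CARD('n)) * 1"
    by (intro norm_vec_eq_if_abs_nth_eq) (simp_all add: kuhn_vertex_def)
  then show ?thesis
    by (simp add: dist_norm)
qed

lemma diameter_kuhn_simplex: "diameter (kuhn_simplex p) = sqrt (real CARD('n))"
  using diameter_eq_if_antipodal_in_cball[OF kuhn_simplex_subset_cball
      vertex_in_kuhn_simplex vertex_in_kuhn_simplex dist_vertex_0_vertex_card]
  by simp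

lemma circum_diam_kuhn_simplex: "circum_diam (kuhn_simplex p) = sqrt (real CARD('n))"
  using circum_diam_eq_if_antipodal_in_cball[OF kuhn_simplex_subset_cball
      vertex_in_kuhn_simplex vertex_in_kuhn_simplex dist_vertex_0_vertex_card]
  by simp

lemma cball_subset_kuhn_simplex_iff:
  assumes "0 \<le> r"
  shows "cball c r \<subseteq> kuhn_simplex p \<longleftrightarrow> (\<forall>j\<le>CARD('n). r * norm (facet_normal j) \<le> bary c j)"
proof -
  have "cball c r \<subseteq> kuhn_simplex p \<longleftrightarrow> (\<forall>j\<le>CARD('n). cball c r \<subseteq> {x. 0 \<le> bary x j})"
    by (auto simp: kuhn_simplex_eq_bary_nonneg)
  also have "\<dots> \<longleftrightarrow> (\<forall>j\<le>CARD('n). r * norm (facet_normal j) \<le> bary c j)"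
  proof (intro all_cong1 imp_cong refl)
    fix j assume "j \<le> CARD('n)"
    have "- of_bool (j = 0) + r * norm (facet_normal j) \<le> inner (facet_normal j) c
        \<longleftrightarrow> r * norm (facet_normal j) \<le> bary c j"
      unfolding bary_def by linarith
    with cball_subset_halfspace_ge_iff[OF facet_normal_nonzero[OF \<open>j \<le> CARD('n)\<close>] assms]
    show "cball c r \<subseteq> {x. 0 \<le> bary x j} \<longleftrightarrow> r * norm (facet_normal j) \<le> bary c j"
      by (simp add: bary_nonneg_eq_halfspace)
  qed
  finally show ?thesis .
qed

lemma in_diam_kuhn_simplex:
  "in_diam (kuhn_simplex p) = 2 / (\<Sum>j\<le>CARD('n). norm (facet_normal j))"
proof -
  define s where "s = (\<Sum>j\<le>CARD('n). norm (facet_normal j))"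
  have "0 < s"
    unfolding s_def using facet_normal_nonzero by (intro sum_pos) auto
  define c where "c = (\<Sum>k\<le>CARD('n). (norm (facet_normal k) / s) *\<^sub>R vertex k)"
  have "(\<Sum>k\<le>CARD('n). norm (facet_normal k) / s) = 1"
    using \<open>0 < s\<close> by (simp add: s_def flip: sum_divide_distrib)
  then have "bary c j = norm (facet_normal j) / s" if "j \<le> CARD('n)" for j
    unfolding c_def using that by (rule bary_convex_combination)
  then have "cball c (1 / s) \<subseteq> kuhn_simplex p"
    using \<open>0 < s\<close> by (simp add: cball_subset_kuhn_simplex_iff)
  moreover have "r \<le> 1 / s" if "cball c' r \<subseteq> kuhn_simplex p" for c' r
  proof (cases "0 \<le> r")
    case True
    have "r * s = (\<Sum>j\<le>CARD('n). r * norm (facet_normal j))"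
      by (simp add: s_def sum_distrib_left)
    also have "\<dots> \<le> (\<Sum>j\<le>CARD('n). bary c' j)"
      using that True by (intro sum_mono) (simp add: cball_subset_kuhn_simplex_iff)
    finally show ?thesis
      using \<open>0 < s\<close> by (simp add: sum_bary field_simps)
  next
    case False
    moreover have "0 < 1 / s"
      using \<open>0 < s\<close> by simp
    ultimately show ?thesis
      by linarith
  qed
  ultimately have "Sup {\<rho>. \<exists>c. cball c \<rho> \<subseteq> kuhn_simplex p} = 1 / s"
    by (intro cSup_eq_maximum) auto
  then show ?thesis
    by (simp add: in_diam_def s_def)
qed

lemma inj_on_vertex: "inj_on vertex {..CARD('n)}"
proof (rule inj_onI)
  fix l l' assume "l \<in> {..CARD('n)}" "l' \<in> {..CARD('n)}" "vertex l = vertex l'"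
  then have "bary (vertex l) l = bary (vertex l') l"
    by simp
  with \<open>l \<in> {..CARD('n)}\<close> \<open>l' \<in> {..CARD('n)}\<close> show "l = l'"
    by (simp add: bary_vertex)
qed

lemma affine_independent_vertices: "\<not> affine_dependent vertices"
proof (rule affine_independent_if_separated_by_hyperplanes)
  fix a assume "a \<in> vertices"
  then obtain k where k: "k \<le> CARD('n)" "a = vertex k"
    by (auto simp: vertices_def)
  have "inner (facet_normal k) a \<noteq> - of_bool (k = 0)"
    using k bary_vertex[of k k] by (simp add: bary_def)
  moreover have "inner (facet_normal k) y = - of_bool (k = 0)" if y: "y \<in> vertices - {a}" for y
  proof -
    obtain l where "l \<le> CARD('n)" "y = vertex l" "l \<noteq> k"
      using y k by (auto simp: vertices_def)
    then have "bary y k = 0"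
      by (simp add: bary_vertex)
    then show ?thesis
      by (simp add: bary_def)
  qed
  ultimately show "\<exists>u b. inner u a \<noteq> b \<and> (\<forall>y\<in>vertices - {a}. inner u y = b)"
    by blast
qed

lemma aff_dim_kuhn_simplex: "aff_dim (kuhn_simplex p) = CARD('n)"
proof -
  have "card vertices = CARD('n) + 1"
    using card_image[OF inj_on_vertex] by (simp add: vertices_def)
  then show ?thesis
    using affine_independent_vertices
    by (simp add: kuhn_simplex_eq_convex_hull_vertices aff_dim_convex_hull affine_independent_iff_card)
qed

lemma facet_eq_bary_zero:
  assumes "k \<le> CARD('n)"
  shows "facet k = {x \<in> kuhn_simplex p. bary x k = 0}"
proof
  have "{x \<in> kuhn_simplex p. bary x k = 0}
      = kuhn_simplex p \<inter> {x. inner (facet_normal k) x = - of_bool (k = 0)}"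
    by (auto simp: bary_def)
  then have "convex {x \<in> kuhn_simplex p. bary x k = 0}"
    by (simp add: convex_Int convex_hyperplane kuhn_simplex_eq_convex_hull_vertices)
  moreover have "vertices - {vertex k} \<subseteq> {x \<in> kuhn_simplex p. bary x k = 0}"
    using vertex_in_kuhn_simplex by (auto simp: vertices_def bary_vertex)
  ultimately show "facet k \<subseteq> {x \<in> kuhn_simplex p. bary x k = 0}"
    by (simp add: facet_def hull_minimal)
next
  show "{x \<in> kuhn_simplex p. bary x k = 0} \<subseteq> facet k"
  proof clarify
    fix x assume "x \<in> kuhn_simplex p" "bary x k = 0"
    then have nonneg: "\<forall>j\<le>CARD('n). 0 \<le> bary x j"
      by (simp add: kuhn_simplex_eq_bary_nonneg)
    have "x = (\<Sum>j\<in>{..CARD('n)} - {k}. bary x j *\<^sub>R vertex j)"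
      using sum.remove[of "{..CARD('n)}" k "\<lambda>j. bary x j *\<^sub>R vertex j"] assms
        \<open>bary x k = 0\<close> by (simp add: sum_bary_scaleR_vertex)
    also have "\<dots> \<in> facet k"
      unfolding facet_def
    proof (rule convex_sum)
      show "(\<Sum>j\<in>{..CARD('n)} - {k}. bary x j) = 1"
        using sum.remove[of "{..CARD('n)}" k "bary x"] assms \<open>bary x k = 0\<close> by (simp add: sum_bary)
      show "vertex j \<in> convex hull (vertices - {vertex k})" if "j \<in> {..CARD('n)} - {k}" for j
        using that assms inj_on_vertex by (auto simp: vertices_def inj_on_eq_iff intro!: hull_inc)
    qed (use nonneg in auto)
    finally show "x \<in> facet k" .
  qed
qed

lemma facet_nonempty:
  assumes "k \<le> CARD('n)"
  shows "facet k \<noteq> {}"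
proof -
  define l where "l = (if k = 0 then CARD('n) else 0)"
  have "l \<le> CARD('n)" "l \<noteq> k"
    using zero_less_card_finite[where 'a='n] by (auto simp: l_def)
  then have "vertex l \<in> facet k"
    using assms by (simp add: facet_eq_bary_zero vertex_in_kuhn_simplex bary_vertex)
  then show ?thesis
    by blast
qed

lemma faces_of_codim_one:
  "{f. f face_of kuhn_simplex p \<and> aff_dim f = int CARD('n) - 1} = facet ` {..CARD('n)}"
proof -
  have "f face_of kuhn_simplex p \<and> aff_dim f = int CARD('n) - 1 \<longleftrightarrow> f facet_of kuhn_simplex p" for f
    using aff_dim_empty[of f] zero_less_card_finite
    by (auto simp: facet_of_def aff_dim_kuhn_simplex)
  also have "\<dots> f \<longleftrightarrow> f \<in> facet ` {..CARD('n)}" for f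
  proof -
    have "f facet_of kuhn_simplex p \<longleftrightarrow> f \<noteq> {} \<and> (\<exists>u\<in>vertices. f = convex hull (vertices - {u}))"
      using facet_of_convex_hull_affine_independent[OF affine_independent_vertices]
      by (simp add: kuhn_simplex_eq_convex_hull_vertices Bex_def)
    moreover have "(\<exists>u\<in>vertices. f = convex hull (vertices - {u})) \<longleftrightarrow> f \<in> facet ` {..CARD('n)}"
      by (auto simp: facet_def vertices_def)
    ultimately show ?thesis
      using facet_nonempty by auto
  qed
  finally show ?thesis
    by auto
qed

lemma bary_le_one: "x \<in> kuhn_simplex p \<Longrightarrow> j \<le> CARD('n) \<Longrightarrow> bary x j \<le> 1"
  using member_le_sum[of j "{..CARD('n)}" "bary x"] sum_bary[of x]
  by (simp add: kuhn_simplex_eq_bary_nonneg)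

text \<open>Since distinct facet normals make non-acute angles, moving along \<^term>\<open>facet_normal k\<close>
  only increases the other barycentric coordinates.\<close>

lemma projection_to_facet_in_facet:
  assumes "x \<in> kuhn_simplex p" and "k \<le> CARD('n)"
  shows "x - (bary x k / (norm (facet_normal k))\<^sup>2) *\<^sub>R facet_normal k \<in> facet k"
    (is "?y \<in> _")
proof -
  have bary_y: "bary ?y j
      = bary x j - bary x k / (norm (facet_normal k))\<^sup>2 * inner (facet_normal j) (facet_normal k)" for j
    using bary_diff[of x j ?y] by simp
  have "bary ?y k = 0"
    using bary_y[of k] facet_normal_nonzero[OF assms(2)] by (simp add: power2_norm_eq_inner)
  moreover have "0 \<le> bary ?y j" if "j \<le> CARD('n)" for j
  proof (cases "j = k")
    case True
    then show ?thesis
      using \<open>bary ?y k = 0\<close> by simp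
  next
    case False
    have "0 \<le> bary x k"
      using assms by (simp add: kuhn_simplex_eq_bary_nonneg)
    then have "0 \<le> bary x k / (norm (facet_normal k))\<^sup>2 * - inner (facet_normal j) (facet_normal k)"
      using inner_facet_normal_nonpos[OF False] by (intro mult_nonneg_nonneg) auto
    moreover have "0 \<le> bary x j"
      using assms(1) that by (simp add: kuhn_simplex_eq_bary_nonneg)
    ultimately show ?thesis
      by (simp add: bary_y)
  qed
  ultimately show ?thesis
    using assms(2) by (simp add: facet_eq_bary_zero kuhn_simplex_eq_bary_nonneg)
qed

lemma infdist_facet_le:
  assumes "x \<in> kuhn_simplex p" and "k \<le> CARD('n)"
  shows "infdist x (facet k) \<le> 1 / norm (facet_normal k)"
proof (rule infdist_le2[OF projection_to_facet_in_facet[OF assms]])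
  have "0 < norm (facet_normal k)"
    using facet_normal_nonzero[OF assms(2)] by simp
  moreover have "0 \<le> bary x k" "bary x k \<le> 1"
    using assms bary_le_one by (auto simp: kuhn_simplex_eq_bary_nonneg)
  ultimately show "dist x (x - (bary x k / (norm (facet_normal k))\<^sup>2) *\<^sub>R facet_normal k)
      \<le> 1 / norm (facet_normal k)"
    by (simp add: dist_norm power2_eq_square divide_right_mono)
qed

lemma infdist_vertex_facet_ge:
  assumes "k \<le> CARD('n)"
  shows "1 / norm (facet_normal k) \<le> infdist (vertex k) (facet k)"
proof -
  have "1 / norm (facet_normal k) \<le> dist (vertex k) y" if "y \<in> facet k" for y
  proof -
    have "1 = inner (facet_normal k) (vertex k - y)"
      using that assms bary_diff[of "vertex k" k y] by (simp add: facet_eq_bary_zero bary_vertex)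
    also have "\<dots> \<le> norm (facet_normal k) * dist (vertex k) y"
      by (simp add: dist_norm norm_cauchy_schwarz)
    finally show ?thesis
      using facet_normal_nonzero[OF assms] by (simp add: field_simps)
  qed
  then show ?thesis
    using facet_nonempty[OF assms] by (simp add: infdist_notempty cINF_greatest)
qed

lemma Sup_infdist_facet:
  assumes "k \<le> CARD('n)"
  shows "Sup ((\<lambda>x. infdist x (facet k)) ` kuhn_simplex p) = 1 / norm (facet_normal k)"
proof (rule antisym)
  show "Sup ((\<lambda>x. infdist x (facet k)) ` kuhn_simplex p) \<le> 1 / norm (facet_normal k)"
    using vertex_in_kuhn_simplex[of 0] infdist_facet_le[OF _ assms] by (auto intro!: cSup_least)
  show "1 / norm (facet_normal k) \<le> Sup ((\<lambda>x. infdist x (facet k)) ` kuhn_simplex p)"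
    using infdist_vertex_facet_ge[OF assms] vertex_in_kuhn_simplex[OF assms] infdist_facet_le[OF _ assms]
    by (intro cSup_upper2 bdd_aboveI2) auto
qed

lemma min_height_kuhn_simplex:
  assumes "2 \<le> CARD('n)"
  shows "min_height (kuhn_simplex p) = 1 / sqrt 2"
proof -
  have "min_height (kuhn_simplex p) = Inf ((\<lambda>k. 1 / norm (facet_normal k)) ` {..CARD('n)})"
    unfolding min_height_def faces_of_codim_one image_image
    by (intro arg_cong[where f=Inf] image_cong) (simp_all add: Sup_infdist_facet)
  also have "\<dots> = 1 / sqrt 2"
  proof (rule cInf_eq_minimum)
    show "1 / sqrt 2 \<in> (\<lambda>k. 1 / norm (facet_normal k)) ` {..CARD('n)}"
      using assms norm_facet_normal[of 1] by (intro image_eqI[where x=1]) auto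
    show "1 / sqrt 2 \<le> x" if "x \<in> (\<lambda>k. 1 / norm (facet_normal k)) ` {..CARD('n)}" for x
      using that by (auto simp: norm_facet_normal)
  qed
  finally show ?thesis .
qed

end

theorem lemmaA5:
  fixes p :: "nat \<Rightarrow> 'n::finite" and T :: "(real^'n) set"
  assumes "CARD('n) \<ge> 2"
    and "bij_betw p {1..CARD('n)} (UNIV :: 'n set)"
    and "T = kuhn_simplex p"
  shows "diameter T = sqrt (real CARD('n)) \<and> circum_diam T = sqrt (real CARD('n))
    \<and> min_height T = 1 / sqrt 2
    \<and> 1 / in_diam T = 1 + (real CARD('n) - 1) / sqrt 2
    \<and> gamma_ratio T = sqrt (real CARD('n)) * (1 + (real CARD('n) - 1) / sqrt 2)
    \<and> 2 * gamma_ratio T * diameter T / min_height T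
        = 2 * real CARD('n) * (real CARD('n) + sqrt 2 - 1)"
proof -
  interpret kuhn_permutation p
    using assms(2) by unfold_locales
  have diam: "diameter T = sqrt (real CARD('n))"
    and circ: "circum_diam T = sqrt (real CARD('n))"
    and height: "min_height T = 1 / sqrt 2"
    using diameter_kuhn_simplex circum_diam_kuhn_simplex min_height_kuhn_simplex[OF assms(1)] assms(3)
    by simp_all
  have inv_in_diam: "1 / in_diam T = 1 + (real CARD('n) - 1) / sqrt 2"
    using in_diam_kuhn_simplex sum_norm_facet_normal assms(3) by (simp add: field_simps)
  then have gamma: "gamma_ratio T = sqrt (real CARD('n)) * (1 + (real CARD('n) - 1) / sqrt 2)"
    by (simp add: gamma_ratio_def circ divide_inverse)
  have "2 * gamma_ratio T * diameter T / min_height T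
      = 2 * (sqrt (real CARD('n)) * sqrt (real CARD('n))) * (sqrt 2 + (real CARD('n) - 1))"
    by (simp add: gamma diam height field_simps)
  then show ?thesis
    using diam circ height inv_in_diam gamma by simp
qed

end
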